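(* Let $\mathcal{F}=\{N_r:r\in\mathbb{N}\}$ be a countable almost disjoint family of infinite subsets of $\mathbb{N}$ and let $(\lambda_{i,j})_{i,j\in\mathbb{N}}$ be a real matrix such that: (i) $\lim_{i\to\infty}\lambda_{i,j}=0$ for every $j\in\mathbb{N}$; (ii) $\sum_{j\in\mathbb{N}}|\lambda_{i,j}|<\infty$ for every $i\in\mathbb{N}$; (iii) $\lim_{i\to\infty}\sum_{j\in\mathbb{N}}\lambda_{i,j}=1$. If $\lim_{i\to\infty}\sum_{j\in N_1\cup\dots\cup N_r}\lambda_{i,j}=0$ for every $r\in\mathbb{N}$, then there exists an infinite set $N'\subset\mathbb{N}$ such that $\mathcal{F}\cup\{N'\}$ is almost disjoint and $\limsup_{i\to\infty}\sum_{j\in N'}\lambda_{i,j}\ge\frac12$.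
   Context: An almost disjoint family is an infinite family of pairwise almost disjoint infinite subsets of $\mathbb{N}$, where two sets are almost disjoint if their intersection is finite. *)

theory Defs
  imports "HOL-Analysis.Analysis"
begin

definition almost_disjoint_family :: "nat set set \<Rightarrow> bool" where
  "almost_disjoint_family F \<longleftrightarrow>
     infinite F \<and> (\<forall>A\<in>F. infinite A) \<and> (\<forall>A\<in>F. \<forall>B\<in>F. A \<noteq> B \<longrightarrow> finite (A \<inter> B))"

end

theory Submission
  imports Defs
begin

text \<open>Write \<open>S\<^sub>m = N\<^sub>0 \<union> \<dots> \<union> N\<^sub>m\<close>. Since the row sums over \<open>-S\<^sub>m\<close> tend to 1, one can choose
  rows \<open>i\<^sub>m \<ge> m\<close> and block boundaries \<open>b\<^sub>0 < b\<^sub>1 < \<dots>\<close> such that row \<open>i\<^sub>m\<close> sums to more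
  than \<open>3/4\<close> over \<open>-S\<^sub>m\<close> and has \<open>\<ell>\<^sup>1\<close>-mass less than \<open>1/4\<close> outside the block
  \<open>[b\<^sub>m, b\<^sub>m\<^sub>+\<^sub>1)\<close>. Let \<open>N'\<close> take from the \<open>m\<close>-th block everything outside \<open>S\<^sub>m\<close>. Then \<open>N'\<close>
  meets \<open>N\<^sub>k\<close> only below \<open>b\<^sub>k\<close>, and \<open>N'\<close> agrees with \<open>-S\<^sub>m\<close> on the \<open>m\<close>-th block, so its
  sum in row \<open>i\<^sub>m\<close> exceeds \<open>1/2\<close>. It is infinite because, by column convergence, row sums
  over a finite set tend to 0.\<close>

lemma frequently_le_Limsup:
  fixes f :: "'a \<Rightarrow> 'b::complete_lattice"
  assumes "\<exists>\<^sub>F x in F. c \<le> f x"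
  shows "c \<le> Limsup F f"
  unfolding Limsup_def
proof (rule INF_greatest)
  fix P assume "P \<in> {P. eventually P F}"
  then have "\<exists>\<^sub>F x in F. c \<le> f x \<and> P x"
    using assms frequently_eventually_frequently by blast
  then obtain x where "P x" "c \<le> f x"
    using frequently_ex by blast
  then show "c \<le> (SUP x\<in>Collect P. f x)"
    by (auto intro: SUP_upper2)
qed

lemma limsup_infsum_finite:
  fixes lam :: "nat \<Rightarrow> 'a \<Rightarrow> real"
  assumes "finite A" and col: "\<And>j. (\<lambda>i. lam i j) \<longlonglongrightarrow> 0"
  shows "limsup (\<lambda>i. ereal (infsum (lam i) A)) = 0"
proof -
  have "(\<lambda>i. ereal (infsum (lam i) A)) \<longlonglongrightarrow> ereal 0"
    using \<open>finite A\<close> by (intro tendsto_ereal) (simp add: tendsto_null_sum col)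
  then show ?thesis
    by (intro lim_imp_Limsup) (simp_all add: zero_ereal_def)
qed

lemma infsum_UNIV_eq_suminf:
  fixes f :: "nat \<Rightarrow> 'a::{topological_comm_monoid_add, t2_space}"
  assumes "f summable_on UNIV"
  shows "infsum f UNIV = suminf f"
  using has_sum_imp_sums[OF has_sum_infsum[OF assms]] by (rule sums_unique)

lemma tendsto_infsum_atLeast_zero:
  fixes f :: "nat \<Rightarrow> 'a::{topological_ab_group_add, t2_space}"
  assumes f: "f summable_on UNIV"
  shows "(\<lambda>n. infsum f {n..}) \<longlonglongrightarrow> 0"
proof -
  have tail: "infsum f {n..} = infsum f UNIV - sum f {..<n}" for n
    using infsum_Diff[OF f, of "{..<n}"] by (simp add: Compl_lessThan[symmetric] Compl_eq_Diff_UNIV)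
  have "(\<lambda>n. sum f {..<n}) \<longlonglongrightarrow> infsum f UNIV"
    using has_sum_imp_sums[OF has_sum_infsum[OF f]] by (simp add: sums_def)
  then have "(\<lambda>n. infsum f UNIV - sum f {..<n}) \<longlonglongrightarrow> infsum f UNIV - infsum f UNIV"
    by (intro tendsto_diff tendsto_const)
  then show ?thesis
    by (simp add: tail)
qed

lemma summable_abs_imp_summable_on:
  fixes f :: "nat \<Rightarrow> real"
  assumes "summable (\<lambda>j. \<bar>f j\<bar>)"
  shows "f summable_on A"
proof -
  have "f summable_on UNIV"
    using norm_summable_imp_summable_on[of f] assms by simp
  then show ?thesis
    by (rule summable_on_subset_banach) simp
qed

lemma infsum_Compl_eq_suminf_diff:
  fixes f :: "nat \<Rightarrow> real"
  assumes "summable (\<lambda>j. \<bar>f j\<bar>)"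
  shows "infsum f (- A) = suminf f - infsum f A"
  using infsum_Diff[of f UNIV A] infsum_UNIV_eq_suminf[of f] summable_abs_imp_summable_on[OF assms]
  by (simp add: Compl_eq_Diff_UNIV)

lemma abs_infsum_diff_le:
  fixes f :: "'a \<Rightarrow> real"
  assumes f: "f summable_on UNIV" and D: "(A - B) \<union> (B - A) \<subseteq> D"
  shows "\<bar>infsum f A - infsum f B\<bar> \<le> infsum (\<lambda>x. \<bar>f x\<bar>) D"
proof -
  have sf: "f summable_on X" for X
    using f summable_on_subset_banach by blast
  have sa: "(\<lambda>x. \<bar>f x\<bar>) summable_on X" for X
    using f summable_on_iff_abs_summable_on_real[of f] summable_on_subset_banach by fastforce
  have split: "infsum f X = infsum f (X \<inter> Y) + infsum f (X - Y)" for X Y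
  proof -
    have "infsum f (X \<inter> Y \<union> (X - Y)) = infsum f (X \<inter> Y) + infsum f (X - Y)"
      by (rule infsum_Un_disjoint[OF sf sf]) blast
    then show ?thesis
      by (simp add: Int_Diff_Un)
  qed
  have "\<bar>infsum f A - infsum f B\<bar> = \<bar>infsum f (A - B) - infsum f (B - A)\<bar>"
    using split[of A B] split[of B A] by (simp add: Int_commute)
  also have "\<dots> \<le> infsum (\<lambda>x. \<bar>f x\<bar>) (A - B) + infsum (\<lambda>x. \<bar>f x\<bar>) (B - A)"
  proof -
    have bound: "\<bar>infsum f X\<bar> \<le> infsum (\<lambda>x. \<bar>f x\<bar>) X" for X
      using norm_infsum_bound[of f X] summable_on_iff_abs_summable_on_real[of f X] sf by simp
    show ?thesis
      by (rule order_trans[OF abs_triangle_ineq4 add_mono[OF bound bound]])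
  qed
  also have "\<dots> = infsum (\<lambda>x. \<bar>f x\<bar>) ((A - B) \<union> (B - A))"
    by (rule infsum_Un_disjoint[symmetric, OF sa sa]) blast
  also have "\<dots> \<le> infsum (\<lambda>x. \<bar>f x\<bar>) D"
    using D by (intro infsum_mono_neutral sa) auto
  finally show ?thesis .
qed

lemma exists_row_and_block:
  fixes lam :: "nat \<Rightarrow> nat \<Rightarrow> real" and P :: "nat \<Rightarrow> bool"
  assumes col: "\<And>j. (\<lambda>i. lam i j) \<longlonglongrightarrow> 0"
    and row: "\<And>i. summable (\<lambda>j. \<bar>lam i j\<bar>)"
    and P: "eventually P sequentially"
    and "\<epsilon> > 0"
  shows "\<exists>b'>b. \<exists>i\<ge>m. P i \<and> infsum (\<lambda>j. \<bar>lam i j\<bar>) ({..<b} \<union> {b'..}) < \<epsilon>"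
proof -
  have "(\<lambda>i. \<Sum>j<b. \<bar>lam i j\<bar>) \<longlonglongrightarrow> 0"
    by (intro tendsto_null_sum tendsto_rabs_zero col)
  then have "\<forall>\<^sub>F i in sequentially. (\<Sum>j<b. \<bar>lam i j\<bar>) < \<epsilon>/2"
    using \<open>\<epsilon> > 0\<close> by (intro order_tendstoD) auto
  then have "\<forall>\<^sub>F i in sequentially. m \<le> i \<and> P i \<and> (\<Sum>j<b. \<bar>lam i j\<bar>) < \<epsilon>/2"
    using P eventually_ge_at_top[of m] by eventually_elim simp
  then obtain i where i: "m \<le> i" "P i" "(\<Sum>j<b. \<bar>lam i j\<bar>) < \<epsilon>/2"
    using eventually_happens'[OF sequentially_bot] by blast
  have abs_summable: "(\<lambda>j. \<bar>lam i j\<bar>) summable_on X" for X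
    using summable_abs_imp_summable_on[of "\<lambda>j. \<bar>lam i j\<bar>"] row[of i] by simp
  have "\<forall>\<^sub>F n in sequentially. infsum (\<lambda>j. \<bar>lam i j\<bar>) {n..} < \<epsilon>/2"
    using tendsto_infsum_atLeast_zero[OF abs_summable] \<open>\<epsilon> > 0\<close> by (intro order_tendstoD) auto
  then have "\<forall>\<^sub>F n in sequentially. b < n \<and> infsum (\<lambda>j. \<bar>lam i j\<bar>) {n..} < \<epsilon>/2"
    using eventually_gt_at_top[of b] by eventually_elim simp
  then obtain b' where b': "b < b'" "infsum (\<lambda>j. \<bar>lam i j\<bar>) {b'..} < \<epsilon>/2"
    using eventually_happens'[OF sequentially_bot] by blast
  have "infsum (\<lambda>j. \<bar>lam i j\<bar>) ({..<b} \<union> {b'..}) =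
      (\<Sum>j<b. \<bar>lam i j\<bar>) + infsum (\<lambda>j. \<bar>lam i j\<bar>) {b'..}"
    using b' by (subst infsum_Un_disjoint[OF abs_summable abs_summable]) auto
  then have "infsum (\<lambda>j. \<bar>lam i j\<bar>) ({..<b} \<union> {b'..}) < \<epsilon>"
    using i b' by linarith
  then show ?thesis
    using i b' by blast
qed

lemma exists_rows_and_blocks:
  fixes lam :: "nat \<Rightarrow> nat \<Rightarrow> real" and P :: "nat \<Rightarrow> nat \<Rightarrow> bool"
  assumes col: "\<And>j. (\<lambda>i. lam i j) \<longlonglongrightarrow> 0"
    and row: "\<And>i. summable (\<lambda>j. \<bar>lam i j\<bar>)"
    and P: "\<And>m. eventually (P m) sequentially"
    and "\<epsilon> > 0"
  shows "\<exists>b. strict_mono b \<and>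
    (\<forall>m. \<exists>i\<ge>m. P m i \<and> infsum (\<lambda>j. \<bar>lam i j\<bar>) ({..<b m} \<union> {b (Suc m)..}) < \<epsilon>)"
proof -
  have "\<exists>b. \<forall>m. True \<and> b m < b (Suc m) \<and>
      (\<exists>i\<ge>m. P m i \<and> infsum (\<lambda>j. \<bar>lam i j\<bar>) ({..<b m} \<union> {b (Suc m)..}) < \<epsilon>)"
    by (rule dependent_nat_choice) (simp_all add: exists_row_and_block[OF col row P \<open>\<epsilon> > 0\<close>])
  then show ?thesis
    by (auto simp: strict_mono_Suc_iff)
qed

definition blocks_avoiding :: "(nat \<Rightarrow> nat) \<Rightarrow> (nat \<Rightarrow> nat set) \<Rightarrow> nat set" where
  "blocks_avoiding b S = (\<Union>m. {b m..<b (Suc m)} - S m)"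

lemma blocks_avoiding_Int_subset:
  assumes "mono b" "mono S"
  shows "blocks_avoiding b S \<inter> S k \<subseteq> {..<b k}"
proof
  fix x assume x: "x \<in> blocks_avoiding b S \<inter> S k"
  then obtain m where m: "x \<in> {b m..<b (Suc m)}" "x \<notin> S m"
    unfolding blocks_avoiding_def by blast
  have "m < k"
    using x m \<open>mono S\<close> by (metis IntD2 monoD not_less subsetD)
  then have "b (Suc m) \<le> b k"
    using \<open>mono b\<close> by (simp add: monoD)
  then show "x \<in> {..<b k}"
    using m by simp
qed

lemma blocks_avoiding_sym_diff_Compl:
  assumes "mono b" "mono S"
  shows "(blocks_avoiding b S - - S k) \<union> (- S k - blocks_avoiding b S) \<subseteq> {..<b k} \<union> {b (Suc k)..}"
proof -
  have "- S k - blocks_avoiding b S \<subseteq> - {b k..<b (Suc k)}"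
    unfolding blocks_avoiding_def by blast
  then show ?thesis
    using blocks_avoiding_Int_subset[OF assms, of k] by auto
qed

lemma frequently_infsum_blocks_avoiding_gt:
  fixes lam :: "nat \<Rightarrow> nat \<Rightarrow> real"
  assumes row: "\<And>i. summable (\<lambda>j. \<bar>lam i j\<bar>)" and "mono b" "mono S"
    and rows: "\<And>m. \<exists>i\<ge>m. c < infsum (lam i) (- S m) \<and>
      infsum (\<lambda>j. \<bar>lam i j\<bar>) ({..<b m} \<union> {b (Suc m)..}) < \<epsilon>"
  shows "\<exists>\<^sub>F i in sequentially. c - \<epsilon> < infsum (lam i) (blocks_avoiding b S)"
  unfolding frequently_sequentially
proof
  fix m
  obtain i where "m \<le> i" "c < infsum (lam i) (- S m)"
    "infsum (\<lambda>j. \<bar>lam i j\<bar>) ({..<b m} \<union> {b (Suc m)..}) < \<epsilon>"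
    using rows by blast
  moreover have "\<bar>infsum (lam i) (blocks_avoiding b S) - infsum (lam i) (- S m)\<bar> \<le>
      infsum (\<lambda>j. \<bar>lam i j\<bar>) ({..<b m} \<union> {b (Suc m)..})"
    using summable_abs_imp_summable_on[OF row]
    by (intro abs_infsum_diff_le blocks_avoiding_sym_diff_Compl assms)
  ultimately show "\<exists>i\<ge>m. c - \<epsilon> < infsum (lam i) (blocks_avoiding b S)"
    by (intro exI[of _ i]) auto
qed

lemma almost_disjoint_family_insert:
  assumes "almost_disjoint_family F" "infinite A" "\<And>B. B \<in> F \<Longrightarrow> finite (A \<inter> B)"
  shows "almost_disjoint_family (insert A F)"
  using assms unfolding almost_disjoint_family_def by (auto simp: Int_commute)

theorem lemma4p11:
  fixes N :: "nat \<Rightarrow> nat set" and lam :: "nat \<Rightarrow> nat \<Rightarrow> real"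
  assumes AD: "almost_disjoint_family (range N)"
    and i: "\<And>j. (\<lambda>i. lam i j) \<longlonglongrightarrow> 0"
    and ii: "\<And>i. summable (\<lambda>j. \<bar>lam i j\<bar>)"
    and iii: "(\<lambda>i. \<Sum>j. lam i j) \<longlonglongrightarrow> 1"
    and H: "\<And>r. (\<lambda>i. \<Sum>\<^sub>\<infinity>j\<in>(\<Union>k\<le>r. N k). lam i j) \<longlonglongrightarrow> 0"
  shows "\<exists>N'. infinite N' \<and> almost_disjoint_family (insert N' (range N)) \<and>
           limsup (\<lambda>i. ereal (\<Sum>\<^sub>\<infinity>j\<in>N'. lam i j)) \<ge> ereal (1/2)"
proof -
  define S where "S m = (\<Union>k\<le>m. N k)" for m
  have S_mono: "mono S"
    unfolding S_def by (intro monoI UN_mono) auto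
  have "(\<lambda>i. infsum (lam i) (- S m)) \<longlonglongrightarrow> 1 - 0" for m
    unfolding infsum_Compl_eq_suminf_diff[OF ii] S_def by (intro tendsto_diff iii H)
  then have "\<forall>\<^sub>F i in sequentially. 3/4 < infsum (lam i) (- S m)" for m
    by (intro order_tendstoD) auto
  then obtain b where b: "strict_mono b" and rows: "\<And>m. \<exists>i\<ge>m. 3/4 < infsum (lam i) (- S m) \<and>
      infsum (\<lambda>j. \<bar>lam i j\<bar>) ({..<b m} \<union> {b (Suc m)..}) < 1/4"
    using exists_rows_and_blocks[OF i ii, of "\<lambda>m i. 3/4 < infsum (lam i) (- S m)" "1/4"] by auto
  have b_mono: "mono b"
    using b by (rule strict_mono_mono)
  define N' where "N' = blocks_avoiding b S"
  have "\<exists>\<^sub>F i in sequentially. 3/4 - 1/4 < infsum (lam i) N'"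
    unfolding N'_def using ii b_mono S_mono rows by (rule frequently_infsum_blocks_avoiding_gt)
  then have limsup: "ereal (1/2) \<le> limsup (\<lambda>i. ereal (infsum (lam i) N'))"
    by (intro frequently_le_Limsup) (auto elim: frequently_elim1)
  then have "infinite N'"
    using limsup_infsum_finite[OF _ i] by force
  moreover have "finite (N' \<inter> B)" if "B \<in> range N" for B
  proof -
    have "N' \<inter> B \<subseteq> {..<b k}" if "B = N k" for k
      using that blocks_avoiding_Int_subset[OF b_mono S_mono, of k] unfolding N'_def S_def by blast
    then show ?thesis
      using \<open>B \<in> range N\<close> finite_subset by blast
  qed
  ultimately show ?thesis
    using almost_disjoint_family_insert[OF AD] limsup by blast
qed

end
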